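(* Let $n\in\mathbb N$ and let $\hat A\in\mathcal A^n$ with $\langle n|\hat A|n\rangle\neq0$. Then there exists $t_0>0$ such that $\mathcal V^{\mathrm{norm}}_t[\hat A]\in\mathcal D^n$ for all $t\ge t_0$.
   Context: Let $\mathcal H=L^2(\mathbb R)$ with annihilation operator $\hat a$, $\hat n=\hat a^\dagger\hat a$ and Fock basis $\{|k\rangle\}$. A quasi-state is a Hermitian trace-class operator of unit trace; a state is a positive semi-definite quasi-state. With $\hat P_n=\sum_{k=0}^n|k\rangle\langle k|$, $\mathcal A^n$ is the set of quasi-states $\hat A$ with $\hat P_n\hat A\hat P_n=\hat A$, and $\mathcal D^n$ the set of states in $\mathcal A^n$. For $t>0$ and such $\hat A$, the Vertigo map is $\mathcal V_t[\hat A]=\sum_{k\ge0}\frac{(t-1)^k}{k!}t^{\hat n/2}\hat a^k\hat A\hat a^{\dagger k}t^{\hat n/2}$ (finite sum), equivalently characterized on Wigner functions $W_{\hat A}(\alpha)=\frac2\pi\mathrm{Tr}[\hat A\hat D(\alpha)(-1)^{\hat n}\hat D(\alpha)^\dagger]$ (with $\hat D(\alpha)=\exp(\alpha\hat a^\dagger-\alpha^*\hat a)$) by $W_{\mathcal V_t[\hat A]}(\alpha)=W_{\hat A}(\sqrt t\alpha)e^{2(t-1)|\alpha|^2}$; and $\mathcal V^{\mathrm{norm}}_t[\hat A]=\mathcal V_t[\hat A]/\mathrm{Tr}\,\mathcal V_t[\hat A]$ whenever this trace is non-zero. *)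

theory Defs
  imports Complex_Main "Jordan_Normal_Form.Matrix"
begin

text \<open>Operators A with P_n A P_n = A are identified with their (n+1) x (n+1)
  block of Fock-basis matrix elements: entry (p,q) is the matrix element of A
  between Fock states p and q, for p,q = 0..n.\<close>

definition fock_dim :: "nat \<Rightarrow> nat" where
  "fock_dim n = Suc n"

definition adj :: "complex mat \<Rightarrow> complex mat" where
  "adj A = mat (dim_col A) (dim_row A) (\<lambda>(i,j). cnj (A $$ (j,i)))"

definition mtrace :: "complex mat \<Rightarrow> complex" where
  "mtrace A = (\<Sum>i<dim_row A. A $$ (i,i))"

text \<open>Annihilation operator compressed to span of Fock states 0..n:
  a |k> = sqrt k |k-1>, so the (k-1,k) entry is sqrt k.  Since a lowers the
  photon number, a P_n = P_n a P_n.\<close>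
definition ann :: "nat \<Rightarrow> complex mat" where
  "ann n = mat (fock_dim n) (fock_dim n)
     (\<lambda>(i,j). if j = Suc i then complex_of_real (sqrt (real j)) else 0)"

text \<open>t^(n_hat/2) restricted to Fock states 0..n (diagonal).\<close>
definition tnum :: "nat \<Rightarrow> real \<Rightarrow> complex mat" where
  "tnum n t = mat (fock_dim n) (fock_dim n)
     (\<lambda>(i,j). if i = j then complex_of_real (t powr (real i / 2)) else 0)"

definition quasi_state_n :: "nat \<Rightarrow> complex mat \<Rightarrow> bool" where
  "quasi_state_n n A \<longleftrightarrow> A \<in> carrier_mat (fock_dim n) (fock_dim n)
      \<and> adj A = A \<and> mtrace A = 1"

definition psd :: "complex mat \<Rightarrow> bool" where
  "psd A \<longleftrightarrow> (\<forall>v \<in> carrier_vec (dim_col A).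
      (let z = map_vec cnj v \<bullet> (A *\<^sub>v v) in Im z = 0 \<and> 0 \<le> Re z))"

definition state_n :: "nat \<Rightarrow> complex mat \<Rightarrow> bool" where
  "state_n n A \<longleftrightarrow> quasi_state_n n A \<and> psd A"

text \<open>Vertigo map: sum over k of (t-1)^k/k! t^(n/2) a^k A a^dag^k t^(n/2).
  The terms with k > n vanish on A^n, so the sum is taken over k = 0..n.\<close>
definition vertigo :: "nat \<Rightarrow> real \<Rightarrow> complex mat \<Rightarrow> complex mat" where
  "vertigo n t A = mat (fock_dim n) (fock_dim n) (\<lambda>ij.
     \<Sum>k\<le>n. complex_of_real ((t - 1) ^ k / fact k) *
       ((tnum n t * (ann n ^\<^sub>m k) * A * (adj (ann n) ^\<^sub>m k) * tnum n t) $$ ij))"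

definition vertigo_norm :: "nat \<Rightarrow> real \<Rightarrow> complex mat \<Rightarrow> complex mat" where
  "vertigo_norm n t A = (1 / mtrace (vertigo n t A)) \<cdot>\<^sub>m vertigo n t A"

end

theory Submission
  imports Defs
begin

(*
  Expanding the defining sum, the (p, q) entry of V_t[A] is
    sum_k (t - 1)^k t^((p + q)/2) sqrt((p + k)!/p! * (q + k)!/q!) / k! * A_(p+k, q+k).
  After division by t^n every term with k + (p + q)/2 < n vanishes as t tends to infinity;
  only k = n - p on the diagonal survives.  Hence t^-n V_t[A] tends to A_nn diag(C(n, p)),
  and the normalised map tends to diag(C(n, p) / 2^n), whose diagonal entries are at least
  2^-n.  A Hermitian matrix that close to it is diagonally dominant, hence positive
  semidefinite.
*)

lemma mult_mat_entry:
  assumes "A \<in> carrier_mat m l" "B \<in> carrier_mat l r" "i < m" "j < r"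
  shows "(A * B) $$ (i, j) = (\<Sum>x<l. A $$ (i, x) * B $$ (x, j))"
  using assms by (auto simp: scalar_prod_def lessThan_atLeast0 intro!: sum.cong)

lemma mult_mat_entry_single:
  assumes "A \<in> carrier_mat m l" "B \<in> carrier_mat l r" "i < m" "j < r"
    and "\<And>x. x < l \<Longrightarrow> x \<noteq> c \<Longrightarrow> A $$ (i, x) * B $$ (x, j) = 0"
  shows "(A * B) $$ (i, j) = (if c < l then A $$ (i, c) * B $$ (c, j) else 0)"
proof -
  have "(A * B) $$ (i, j) = (\<Sum>x<l. if x = c then A $$ (i, c) * B $$ (c, j) else 0)"
    unfolding mult_mat_entry[OF assms(1-4)] using assms(5) by (intro sum.cong) auto
  then show ?thesis by simp
qed

lemma ann_carrier [simp]: "ann n \<in> carrier_mat (Suc n) (Suc n)"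
  by (simp add: ann_def fock_dim_def)

lemma tnum_carrier [simp]: "tnum n t \<in> carrier_mat (Suc n) (Suc n)"
  by (simp add: tnum_def fock_dim_def)

lemma vertigo_carrier [simp]: "vertigo n t A \<in> carrier_mat (Suc n) (Suc n)"
  by (simp add: vertigo_def fock_dim_def)

lemma adj_carrier [simp]: "A \<in> carrier_mat m l \<Longrightarrow> adj A \<in> carrier_mat l m"
  by (simp add: adj_def)

lemma adj_eq_selfI:
  assumes "M \<in> carrier_mat N N" "\<And>i j. i < N \<Longrightarrow> j < N \<Longrightarrow> M $$ (j, i) = cnj (M $$ (i, j))"
  shows "adj M = M"
proof (rule eq_matI)
  fix i j assume "i < dim_row M" "j < dim_col M"
  with assms(1) have ij: "i < N" "j < N" by auto
  with assms(1) have "adj M $$ (i, j) = cnj (M $$ (j, i))" by (simp add: adj_def)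
  also have "\<dots> = M $$ (i, j)" using assms(2)[OF ij] by simp
  finally show "adj M $$ (i, j) = M $$ (i, j)" .
qed (use assms(1) in \<open>simp_all add: adj_def\<close>)

lemma adj_eq_selfD:
  assumes "M \<in> carrier_mat N N" "adj M = M" "i < N" "j < N"
  shows "M $$ (j, i) = cnj (M $$ (i, j))"
proof -
  have "M $$ (j, i) = adj M $$ (j, i)" using assms(2) by simp
  also have "\<dots> = cnj (M $$ (i, j))" using assms(1,3,4) by (simp add: adj_def)
  finally show ?thesis .
qed

lemma adj_smult_mat: "adj (c \<cdot>\<^sub>m M) = cnj c \<cdot>\<^sub>m adj M"
  by (intro eq_matI) (auto simp: adj_def)

lemma mtrace_smult_mat: "M \<in> carrier_mat N N \<Longrightarrow> mtrace (c \<cdot>\<^sub>m M) = c * mtrace M"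
  by (auto simp: mtrace_def sum_distrib_left intro!: sum.cong)

lemma cnj_mtrace_adj_eq_self:
  assumes "M \<in> carrier_mat N N" "adj M = M"
  shows "cnj (mtrace M) = mtrace M"
proof -
  have "cnj (M $$ (i, i)) = M $$ (i, i)" if "i < N" for i
    using adj_eq_selfD[OF assms that that] by simp
  then show ?thesis using assms(1) by (simp add: mtrace_def cnj_sum)
qed

definition ann_pow_coeff :: "nat \<Rightarrow> nat \<Rightarrow> real" where
  "ann_pow_coeff i k = sqrt (fact (i + k) / fact i)"

lemma ann_pow_coeff_Suc: "ann_pow_coeff i k * sqrt (real (Suc (i + k))) = ann_pow_coeff i (Suc k)"
  by (simp add: ann_pow_coeff_def real_sqrt_mult[symmetric] algebra_simps)

lemma ann_pow_coeff_Suc_left: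
  "ann_pow_coeff (Suc i) k * sqrt (real (Suc i)) = ann_pow_coeff i (Suc k)"
proof -
  have "fact (Suc i + k) / fact (Suc i) * real (Suc i) = (fact (Suc (i + k)) / fact i :: real)"
    unfolding fact_Suc by (simp add: field_simps del: of_nat_Suc)
  then show ?thesis
    by (simp add: ann_pow_coeff_def real_sqrt_mult[symmetric])
qed

lemma ann_entry:
  "i \<le> n \<Longrightarrow> j \<le> n \<Longrightarrow> ann n $$ (i, j) = (if j = Suc i then complex_of_real (sqrt (real j)) else 0)"
  by (simp add: ann_def fock_dim_def)

lemma adj_ann_entry:
  "i \<le> n \<Longrightarrow> j \<le> n \<Longrightarrow> adj (ann n) $$ (i, j) = (if i = Suc j then complex_of_real (sqrt (real i)) else 0)"
  by (simp add: ann_def adj_def fock_dim_def)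

lemma ann_pow_entry:
  assumes "i \<le> n" "j \<le> n"
  shows "(ann n ^\<^sub>m k) $$ (i, j) = (if j = i + k then complex_of_real (ann_pow_coeff i k) else 0)"
  using assms
proof (induction k arbitrary: j)
  case 0
  then show ?case using carrier_matD[OF ann_carrier[of n]] by (simp add: ann_pow_coeff_def)
next
  case (Suc k)
  have "(ann n ^\<^sub>m Suc k) $$ (i, j)
      = (if i + k < Suc n then (ann n ^\<^sub>m k) $$ (i, i + k) * ann n $$ (i + k, j) else 0)"
    unfolding pow_mat.simps
    by (rule mult_mat_entry_single[OF pow_carrier_mat[OF ann_carrier] ann_carrier])
      (use Suc.prems in \<open>auto simp: Suc.IH\<close>)
  then show ?case
    using Suc.prems by (auto simp: Suc.IH ann_entry ann_pow_coeff_Suc[symmetric])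
qed

lemma adj_ann_pow_entry:
  assumes "i \<le> n" "j \<le> n"
  shows "(adj (ann n) ^\<^sub>m k) $$ (i, j) = (if i = j + k then complex_of_real (ann_pow_coeff j k) else 0)"
  using assms
proof (induction k arbitrary: i j)
  case 0
  then show ?case using carrier_matD[OF adj_carrier[OF ann_carrier[of n]]] by (simp add: ann_pow_coeff_def)
next
  case (Suc k)
  have "(adj (ann n) ^\<^sub>m Suc k) $$ (i, j)
      = (if Suc j < Suc n then (adj (ann n) ^\<^sub>m k) $$ (i, Suc j) * adj (ann n) $$ (Suc j, j) else 0)"
    unfolding pow_mat.simps
    by (rule mult_mat_entry_single[OF pow_carrier_mat adj_carrier[OF ann_carrier]])
      (use Suc.prems in \<open>auto simp: adj_ann_entry\<close>)
  then show ?case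
    using Suc.prems by (auto simp: Suc.IH adj_ann_entry ann_pow_coeff_Suc_left[symmetric])
qed

lemma tnum_entry:
  "i \<le> n \<Longrightarrow> j \<le> n \<Longrightarrow> tnum n t $$ (i, j) = (if i = j then complex_of_real (t powr (real i / 2)) else 0)"
  by (simp add: tnum_def fock_dim_def)

lemma vertigo_term_entry:
  assumes A: "A \<in> carrier_mat (Suc n) (Suc n)" and "p \<le> n" "q \<le> n"
  shows "(tnum n t * ann n ^\<^sub>m k * A * adj (ann n) ^\<^sub>m k * tnum n t) $$ (p, q)
    = (if p + k \<le> n \<and> q + k \<le> n
       then complex_of_real (t powr (real p / 2) * ann_pow_coeff p k) * A $$ (p + k, q + k)
         * complex_of_real (ann_pow_coeff q k * t powr (real q / 2))
       else 0)"
proof -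
  let ?T = "tnum n t" and ?a = "ann n ^\<^sub>m k" and ?d = "adj (ann n) ^\<^sub>m k"
  have ca: "?a \<in> carrier_mat (Suc n) (Suc n)" and cd: "?d \<in> carrier_mat (Suc n) (Suc n)"
    by (simp_all add: pow_carrier_mat)
  have c1: "?T * ?a \<in> carrier_mat (Suc n) (Suc n)" using tnum_carrier ca by (rule mult_carrier_mat)
  have c2: "?T * ?a * A \<in> carrier_mat (Suc n) (Suc n)" using c1 A by (rule mult_carrier_mat)
  have c3: "?T * ?a * A * ?d \<in> carrier_mat (Suc n) (Suc n)" using c2 cd by (rule mult_carrier_mat)
  have e1: "(?T * ?a) $$ (i, j)
      = (if j = i + k then complex_of_real (t powr (real i / 2) * ann_pow_coeff i k) else 0)"
    if "i \<le> n" "j \<le> n" for i j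
  proof -
    have "(?T * ?a) $$ (i, j) = (if i < Suc n then ?T $$ (i, i) * ?a $$ (i, j) else 0)"
      by (rule mult_mat_entry_single[OF tnum_carrier ca]) (use that in \<open>auto simp: tnum_entry\<close>)
    then show ?thesis using that by (simp add: tnum_entry ann_pow_entry)
  qed
  have e2: "(?T * ?a * A) $$ (i, j)
      = (if i + k \<le> n then complex_of_real (t powr (real i / 2) * ann_pow_coeff i k) * A $$ (i + k, j) else 0)"
    if "i \<le> n" "j \<le> n" for i j
  proof -
    have "(?T * ?a * A) $$ (i, j) = (if i + k < Suc n then (?T * ?a) $$ (i, i + k) * A $$ (i + k, j) else 0)"
      by (rule mult_mat_entry_single[OF c1 A]) (use that in \<open>auto simp: e1\<close>)
    then show ?thesis using that by (simp add: e1)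
  qed
  have e3: "(?T * ?a * A * ?d) $$ (i, j)
      = (if j + k \<le> n then (?T * ?a * A) $$ (i, j + k) * complex_of_real (ann_pow_coeff j k) else 0)"
    if "i \<le> n" "j \<le> n" for i j
  proof -
    have "(?T * ?a * A * ?d) $$ (i, j) = (if j + k < Suc n then (?T * ?a * A) $$ (i, j + k) * ?d $$ (j + k, j) else 0)"
      by (rule mult_mat_entry_single[OF c2 cd]) (use that in \<open>auto simp: adj_ann_pow_entry\<close>)
    then show ?thesis using that by (simp add: adj_ann_pow_entry)
  qed
  have "(?T * ?a * A * ?d * ?T) $$ (p, q) = (if q < Suc n then (?T * ?a * A * ?d) $$ (p, q) * ?T $$ (q, q) else 0)"
    by (rule mult_mat_entry_single[OF c3 tnum_carrier]) (use assms in \<open>auto simp: tnum_entry\<close>)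
  then show ?thesis using assms by (simp add: e2 e3 tnum_entry mult.assoc)
qed

definition vertigo_coeff :: "complex mat \<Rightarrow> nat \<Rightarrow> nat \<Rightarrow> nat \<Rightarrow> nat \<Rightarrow> complex" where
  "vertigo_coeff A n p q k =
    (if p + k \<le> n \<and> q + k \<le> n
     then complex_of_real (ann_pow_coeff p k * ann_pow_coeff q k / fact k) * A $$ (p + k, q + k)
     else 0)"

lemma vertigo_entry:
  assumes "A \<in> carrier_mat (Suc n) (Suc n)" "p \<le> n" "q \<le> n"
  shows "vertigo n t A $$ (p, q)
    = (\<Sum>k\<le>n. complex_of_real ((t - 1) ^ k * t powr ((real p + real q) / 2)) * vertigo_coeff A n p q k)"
proof -
  have "t powr ((real p + real q) / 2) = t powr (real p / 2) * t powr (real q / 2)"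
    by (simp add: add_divide_distrib powr_add)
  then show ?thesis
    using assms unfolding vertigo_def fock_dim_def
    by (auto simp: vertigo_term_entry vertigo_coeff_def intro!: sum.cong)
qed

lemma adj_vertigo:
  assumes A: "A \<in> carrier_mat (Suc n) (Suc n)" "adj A = A"
  shows "adj (vertigo n t A) = vertigo n t A"
proof (rule adj_eq_selfI[OF vertigo_carrier])
  fix p q assume "p < Suc n" "q < Suc n"
  moreover have "vertigo_coeff A n q p k = cnj (vertigo_coeff A n p q k)" if "p \<le> n" "q \<le> n" for k
    using adj_eq_selfD[OF A, of "p + k" "q + k"] by (auto simp: vertigo_coeff_def)
  ultimately show "vertigo n t A $$ (q, p) = cnj (vertigo n t A $$ (p, q))"
    using A by (simp add: vertigo_entry cnj_sum add.commute)
qed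

lemma quasi_state_vertigo_norm:
  assumes A: "quasi_state_n n A" and tr: "mtrace (vertigo n t A) \<noteq> 0"
  shows "quasi_state_n n (vertigo_norm n t A)"
proof -
  have "adj (vertigo n t A) = vertigo n t A"
    using A by (intro adj_vertigo) (auto simp: quasi_state_n_def fock_dim_def)
  moreover from this have "cnj (mtrace (vertigo n t A)) = mtrace (vertigo n t A)"
    by (rule cnj_mtrace_adj_eq_self[OF vertigo_carrier])
  ultimately show ?thesis
    using tr unfolding quasi_state_n_def vertigo_norm_def fock_dim_def
    by (simp add: adj_smult_mat mtrace_smult_mat[OF vertigo_carrier])
qed

lemma quadratic_form_eq_sum:
  assumes "M \<in> carrier_mat N N" "v \<in> carrier_vec N"
  shows "map_vec cnj v \<bullet> (M *\<^sub>v v) = (\<Sum>i<N. \<Sum>j<N. cnj (v $ i) * M $$ (i, j) * v $ j)"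
  using assms
  by (auto simp: scalar_prod_def lessThan_atLeast0 sum_distrib_left mult.assoc intro!: sum.cong)

lemma sum_symmetric_weights_mult_le:
  fixes a :: "nat \<Rightarrow> nat \<Rightarrow> real" and x :: "nat \<Rightarrow> real"
  assumes sym: "\<And>i j. i < N \<Longrightarrow> j < N \<Longrightarrow> a i j = a j i"
    and nonneg: "\<And>i j. i < N \<Longrightarrow> j < N \<Longrightarrow> 0 \<le> a i j"
  shows "(\<Sum>i<N. \<Sum>j<N. a i j * x i * x j) \<le> (\<Sum>i<N. \<Sum>j<N. a i j * (x i)\<^sup>2)"
proof -
  have "x i * x j \<le> ((x i)\<^sup>2 + (x j)\<^sup>2) / 2" for i j
    using sum_squares_bound[of "x i" "x j"] by simp
  then have "(\<Sum>i<N. \<Sum>j<N. a i j * x i * x j) \<le> (\<Sum>i<N. \<Sum>j<N. a i j * (((x i)\<^sup>2 + (x j)\<^sup>2) / 2))"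
    using nonneg by (intro sum_mono) (simp add: mult.assoc mult_left_mono)
  also have "\<dots> = ((\<Sum>i<N. \<Sum>j<N. a i j * (x i)\<^sup>2) + (\<Sum>i<N. \<Sum>j<N. a i j * (x j)\<^sup>2)) / 2"
    by (simp add: sum.distrib sum_divide_distrib distrib_left add_divide_distrib)
  also have "(\<Sum>i<N. \<Sum>j<N. a i j * (x j)\<^sup>2) = (\<Sum>i<N. \<Sum>j<N. a i j * (x i)\<^sup>2)"
    by (subst sum.swap) (use sym in \<open>auto intro!: sum.cong\<close>)
  finally show ?thesis by simp
qed

lemma Re_cnj_mult_mult_self: "Re (cnj x * m * x) = (cmod x)\<^sup>2 * Re m"
proof -
  have "cnj x * m * x = complex_of_real ((cmod x)\<^sup>2) * m"
    unfolding complex_norm_square by (simp add: mult_ac)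
  then show ?thesis
    by (simp only:) (simp del: of_real_power)
qed

lemma cnj_quadratic_form_adj_eq_self:
  assumes M: "M \<in> carrier_mat N N" "adj M = M" and v: "v \<in> carrier_vec N"
  shows "cnj (map_vec cnj v \<bullet> (M *\<^sub>v v)) = map_vec cnj v \<bullet> (M *\<^sub>v v)"
proof -
  have "cnj (map_vec cnj v \<bullet> (M *\<^sub>v v)) = (\<Sum>i<N. \<Sum>j<N. cnj (v $ j) * M $$ (j, i) * v $ i)"
    unfolding quadratic_form_eq_sum[OF M(1) v] cnj_sum
  proof (intro sum.cong refl)
    fix i j assume "i \<in> {..<N}" "j \<in> {..<N}"
    then have "M $$ (j, i) = cnj (M $$ (i, j))" by (intro adj_eq_selfD[OF M]) auto
    then show "cnj (cnj (v $ i) * M $$ (i, j) * v $ j) = cnj (v $ j) * M $$ (j, i) * v $ i"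
      by simp
  qed
  also have "\<dots> = map_vec cnj v \<bullet> (M *\<^sub>v v)"
    unfolding quadratic_form_eq_sum[OF M(1) v] by (rule sum.swap)
  finally show ?thesis .
qed

lemma Re_quadratic_form_ge:
  assumes M: "M \<in> carrier_mat N N" "adj M = M" and v: "v \<in> carrier_vec N"
  shows "(\<Sum>i<N. (cmod (v $ i))\<^sup>2 * (Re (M $$ (i, i)) - (\<Sum>j\<in>{..<N} - {i}. cmod (M $$ (i, j)))))
    \<le> Re (map_vec cnj v \<bullet> (M *\<^sub>v v))"
proof -
  define a where "a i j = (if i = j then 0 else cmod (M $$ (i, j)))" for i j
  have a_sym: "a i j = a j i" if "i < N" "j < N" for i j
  proof -
    have "cmod (M $$ (j, i)) = cmod (M $$ (i, j))" using adj_eq_selfD[OF M that] by simp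
    then show ?thesis by (simp add: a_def)
  qed
  have row_sum: "(\<Sum>j<N. a i j) = (\<Sum>j\<in>{..<N} - {i}. cmod (M $$ (i, j)))" for i
    by (rule sum.mono_neutral_cong_right) (auto simp: a_def)
  let ?w = "\<lambda>i. (cmod (v $ i))\<^sup>2 * Re (M $$ (i, i))"
  have entry_bound: "(if i = j then ?w i else 0) - a i j * cmod (v $ i) * cmod (v $ j)
      \<le> Re (cnj (v $ i) * M $$ (i, j) * v $ j)" for i j
  proof (cases "i = j")
    case True
    then show ?thesis unfolding True a_def Re_cnj_mult_mult_self by simp
  next
    case False
    have "- Re (cnj (v $ i) * M $$ (i, j) * v $ j) \<le> cmod (cnj (v $ i) * M $$ (i, j) * v $ j)"
      by (rule abs_le_D2[OF abs_Re_le_cmod])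
    then show ?thesis using False by (simp add: a_def norm_mult mult_ac)
  qed
  have "(\<Sum>i<N. (cmod (v $ i))\<^sup>2 * (Re (M $$ (i, i)) - (\<Sum>j<N. a i j)))
      = (\<Sum>i<N. ?w i) - (\<Sum>i<N. \<Sum>j<N. a i j * (cmod (v $ i))\<^sup>2)"
    by (simp add: right_diff_distrib sum_subtractf sum_distrib_left sum_distrib_right mult.commute)
  also have "\<dots> \<le> (\<Sum>i<N. ?w i) - (\<Sum>i<N. \<Sum>j<N. a i j * cmod (v $ i) * cmod (v $ j))"
    by (intro diff_left_mono sum_symmetric_weights_mult_le a_sym) (auto simp: a_def)
  also have "\<dots> = (\<Sum>i<N. \<Sum>j<N. (if i = j then ?w i else 0) - a i j * cmod (v $ i) * cmod (v $ j))"
    by (simp add: sum_subtractf)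
  also have "\<dots> \<le> (\<Sum>i<N. \<Sum>j<N. Re (cnj (v $ i) * M $$ (i, j) * v $ j))"
    by (intro sum_mono entry_bound)
  also have "\<dots> = Re (map_vec cnj v \<bullet> (M *\<^sub>v v))"
    by (simp add: quadratic_form_eq_sum[OF M(1) v])
  finally show ?thesis by (simp add: row_sum)
qed

lemma psd_if_diagonally_dominant:
  assumes M: "M \<in> carrier_mat N N" "adj M = M"
    and dominant: "\<And>i. i < N \<Longrightarrow> (\<Sum>j\<in>{..<N} - {i}. cmod (M $$ (i, j))) \<le> Re (M $$ (i, i))"
  shows "psd M"
  unfolding psd_def Let_def
proof
  fix v :: "complex vec" assume "v \<in> carrier_vec (dim_col M)"
  with M(1) have v: "v \<in> carrier_vec N" by simp
  have "Im (cnj (map_vec cnj v \<bullet> (M *\<^sub>v v))) = Im (map_vec cnj v \<bullet> (M *\<^sub>v v))"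
    by (simp only: cnj_quadratic_form_adj_eq_self[OF M v])
  moreover have "0 \<le> (\<Sum>i<N. (cmod (v $ i))\<^sup>2 * (Re (M $$ (i, i)) - (\<Sum>j\<in>{..<N} - {i}. cmod (M $$ (i, j)))))"
    using dominant by (intro sum_nonneg mult_nonneg_nonneg) auto
  ultimately show "Im (map_vec cnj v \<bullet> (M *\<^sub>v v)) = 0 \<and> 0 \<le> Re (map_vec cnj v \<bullet> (M *\<^sub>v v))"
    using Re_quadratic_form_ge[OF M v] by simp
qed

lemma psd_if_near_positive_diagonal:
  assumes M: "M \<in> carrier_mat N N" "adj M = M"
    and diag: "\<And>i. i < N \<Longrightarrow> \<delta> \<le> d i"
    and near: "\<And>i j. i < N \<Longrightarrow> j < N \<Longrightarrow>
      cmod (M $$ (i, j) - (if i = j then complex_of_real (d i) else 0)) \<le> \<delta> / N"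
  shows "psd M"
proof (rule psd_if_diagonally_dominant[OF M])
  fix i assume i: "i < N"
  have "(\<Sum>j\<in>{..<N} - {i}. cmod (M $$ (i, j))) \<le> (\<Sum>j\<in>{..<N} - {i}. \<delta> / N)"
  proof (rule sum_mono)
    fix j assume "j \<in> {..<N} - {i}"
    then show "cmod (M $$ (i, j)) \<le> \<delta> / N" using near[OF i, of j] by auto
  qed
  also have "\<dots> = \<delta> - \<delta> / N"
    using i by (simp add: of_nat_diff field_simps)
  also have "\<dots> \<le> d i - cmod (M $$ (i, i) - complex_of_real (d i))"
    using diag[OF i] near[OF i i] by simp
  also have "\<dots> \<le> Re (M $$ (i, i))"
    using abs_Re_le_cmod[of "M $$ (i, i) - complex_of_real (d i)"] by simp
  finally show "(\<Sum>j\<in>{..<N} - {i}. cmod (M $$ (i, j))) \<le> Re (M $$ (i, i))" .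
qed

lemma tendsto_pow_powr_div_pow_at_top:
  fixes x :: real
  assumes "real k + x \<le> real n"
  shows "((\<lambda>t. (t - 1) ^ k * t powr x / t ^ n) \<longlongrightarrow> (if real k + x = real n then 1 else 0)) at_top"
proof -
  have eq: "\<forall>\<^sub>F t in at_top. (1 - inverse t) ^ k * t powr (real k + x - real n) = (t - 1) ^ k * t powr x / t ^ n"
    using eventually_gt_at_top[of 0]
  proof eventually_elim
    case (elim t)
    then have "1 - inverse t = (t - 1) / t"
      by (simp add: field_simps)
    with elim have "(1 - inverse t) ^ k = (t - 1) ^ k / t powr real k"
      by (simp add: powr_realpow power_divide)
    with elim show ?case
      by (simp add: powr_diff powr_add powr_realpow)
  qed
  have "((\<lambda>t::real. 1 - inverse t) \<longlongrightarrow> 1 - 0) at_top"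
    by (intro tendsto_intros tendsto_inverse_0_at_top filterlim_ident)
  then have base: "((\<lambda>t::real. (1 - inverse t) ^ k) \<longlongrightarrow> 1) at_top"
    using tendsto_power by fastforce
  have decay: "((\<lambda>t. t powr (real k + x - real n)) \<longlongrightarrow> (if real k + x = real n then 1 else 0)) at_top"
  proof (cases "real k + x = real n")
    case True
    have "\<forall>\<^sub>F t in at_top. 1 = t powr (real k + x - real n)"
      using eventually_gt_at_top[of 0] by eventually_elim (simp add: True)
    with True show ?thesis by (simp add: tendsto_eventually)
  next
    case False
    with assms have "real k + x - real n < 0" by simp
    with False show ?thesis by (simp add: tendsto_neg_powr filterlim_ident)
  qed
  show ?thesis
    using tendsto_mult[OF base decay] by (simp add: tendsto_cong[OF eq])
qed

lemma vertigo_coeff_top: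
  assumes "p \<le> n"
  shows "vertigo_coeff A n p p (n - p) = complex_of_real (real (n choose p)) * A $$ (n, n)"
proof -
  have "ann_pow_coeff p (n - p) * ann_pow_coeff p (n - p) / fact (n - p) = real (n choose p)"
    using assms by (simp add: ann_pow_coeff_def binomial_fact)
  with assms show ?thesis by (simp add: vertigo_coeff_def)
qed

lemma vertigo_entry_asymptotics:
  assumes "A \<in> carrier_mat (Suc n) (Suc n)" "p \<le> n" "q \<le> n"
  shows "((\<lambda>t. vertigo n t A $$ (p, q) / complex_of_real (t ^ n)) \<longlongrightarrow>
    (if p = q then complex_of_real (real (n choose p)) * A $$ (n, n) else 0)) at_top"
proof -
  define x where "x = (real p + real q) / 2"
  define c where "c = vertigo_coeff A n p q"
  have expand: "vertigo n t A $$ (p, q) / complex_of_real (t ^ n)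
      = (\<Sum>k\<le>n. complex_of_real ((t - 1) ^ k * t powr x / t ^ n) * c k)" for t
    by (simp add: vertigo_entry[OF assms] x_def c_def sum_divide_distrib)
  have in_range: "c k = 0" if "\<not> (p + k \<le> n \<and> q + k \<le> n)" for k
    using that by (auto simp: c_def vertigo_coeff_def)
  have term_lim: "((\<lambda>t. complex_of_real ((t - 1) ^ k * t powr x / t ^ n) * c k)
      \<longlongrightarrow> (if real k + x = real n then c k else 0)) at_top" for k
  proof (cases "p + k \<le> n \<and> q + k \<le> n")
    case True
    then have "real p + real k \<le> real n" "real q + real k \<le> real n"
      by (simp_all flip: of_nat_add)
    then have "real k + x \<le> real n" unfolding x_def by (simp add: field_simps)
    from tendsto_mult_right[OF tendsto_of_real[OF tendsto_pow_powr_div_pow_at_top[OF this]], of "c k"]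
    show ?thesis by (cases "real k + x = real n") simp_all
  qed (simp add: in_range)
  have dominant: "p + k \<le> n \<and> q + k \<le> n \<and> real k + x = real n \<longleftrightarrow> p = q \<and> k = n - p" for k
  proof -
    have "real k + x = real n \<longleftrightarrow> real ((p + k) + (q + k)) = real (2 * n)"
      by (simp add: x_def field_simps)
    then show ?thesis using assms(2,3) by (simp only: of_nat_eq_iff) auto
  qed
  have "(if real k + x = real n then c k else 0) = (if p = q \<and> k = n - p then c k else 0)" for k
    using dominant[of k] in_range[of k] by auto
  then have "(\<Sum>k\<le>n. if real k + x = real n then c k else 0) = (if p = q then c (n - p) else 0)"
    by (simp add: sum.delta)
  also have "\<dots> = (if p = q then complex_of_real (real (n choose p)) * A $$ (n, n) else 0)"
    using assms by (simp add: c_def vertigo_coeff_top)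
  finally have limit: "(\<Sum>k\<le>n. if real k + x = real n then c k else 0)
      = (if p = q then complex_of_real (real (n choose p)) * A $$ (n, n) else 0)" .
  show ?thesis
    unfolding expand limit[symmetric] by (intro tendsto_sum term_lim)
qed

lemma vertigo_trace_asymptotics:
  assumes "A \<in> carrier_mat (Suc n) (Suc n)"
  shows "((\<lambda>t. mtrace (vertigo n t A) / complex_of_real (t ^ n)) \<longlongrightarrow> 2 ^ n * A $$ (n, n)) at_top"
proof -
  have "mtrace (vertigo n t A) / complex_of_real (t ^ n) = (\<Sum>p\<le>n. vertigo n t A $$ (p, p) / complex_of_real (t ^ n))" for t
    by (simp add: mtrace_def sum_divide_distrib lessThan_Suc_atMost vertigo_def fock_dim_def)
  moreover have "(\<Sum>p\<le>n. complex_of_real (real (n choose p)) * A $$ (n, n)) = 2 ^ n * A $$ (n, n)"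
    by (simp add: sum_distrib_right[symmetric] choose_row_sum flip: of_nat_sum)
  moreover have "((\<lambda>t. vertigo n t A $$ (p, p) / complex_of_real (t ^ n))
      \<longlongrightarrow> complex_of_real (real (n choose p)) * A $$ (n, n)) at_top" if "p \<le> n" for p
    using vertigo_entry_asymptotics[OF assms that that] by simp
  then have "((\<lambda>t. \<Sum>p\<le>n. vertigo n t A $$ (p, p) / complex_of_real (t ^ n))
      \<longlongrightarrow> (\<Sum>p\<le>n. complex_of_real (real (n choose p)) * A $$ (n, n))) at_top"
    by (intro tendsto_sum) simp
  ultimately show ?thesis by simp
qed

lemma vertigo_norm_entry:
  "p \<le> n \<Longrightarrow> q \<le> n \<Longrightarrow> vertigo_norm n t A $$ (p, q) = vertigo n t A $$ (p, q) / mtrace (vertigo n t A)"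
  by (simp add: vertigo_norm_def vertigo_def fock_dim_def)

lemma vertigo_norm_asymptotics:
  assumes A: "A \<in> carrier_mat (Suc n) (Suc n)" "A $$ (n, n) \<noteq> 0" and pq: "p \<le> n" "q \<le> n"
  shows "((\<lambda>t. vertigo_norm n t A $$ (p, q)) \<longlongrightarrow>
    (if p = q then complex_of_real (real (n choose p) / 2 ^ n) else 0)) at_top"
proof -
  have limit_eq: "(if p = q then complex_of_real (real (n choose p)) * A $$ (n, n) else 0) / (2 ^ n * A $$ (n, n))
      = (if p = q then complex_of_real (real (n choose p) / 2 ^ n) else 0)"
    using A(2) by simp
  have "((\<lambda>t. (vertigo n t A $$ (p, q) / complex_of_real (t ^ n)) / (mtrace (vertigo n t A) / complex_of_real (t ^ n)))
      \<longlongrightarrow> (if p = q then complex_of_real (real (n choose p) / 2 ^ n) else 0)) at_top"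
    unfolding limit_eq[symmetric] using A(2)
    by (intro tendsto_divide vertigo_entry_asymptotics vertigo_trace_asymptotics A(1) pq) simp
  moreover have "\<forall>\<^sub>F t in at_top. (vertigo n t A $$ (p, q) / complex_of_real (t ^ n))
      / (mtrace (vertigo n t A) / complex_of_real (t ^ n)) = vertigo_norm n t A $$ (p, q)"
    using eventually_gt_at_top[of 0] by eventually_elim (simp add: vertigo_norm_entry[OF pq])
  ultimately show ?thesis
    by (rule Lim_transform_eventually)
qed

lemma eventually_vertigo_trace_ne_0:
  assumes "A \<in> carrier_mat (Suc n) (Suc n)" "A $$ (n, n) \<noteq> 0"
  shows "\<forall>\<^sub>F t in at_top. mtrace (vertigo n t A) \<noteq> 0"
proof -
  have "\<forall>\<^sub>F t in at_top. mtrace (vertigo n t A) / complex_of_real (t ^ n) \<noteq> 0"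
    using assms(2) by (intro tendsto_imp_eventually_ne[OF vertigo_trace_asymptotics[OF assms(1)]]) simp
  then show ?thesis by eventually_elim auto
qed

lemma eventually_vertigo_norm_near_diagonal:
  assumes "A \<in> carrier_mat (Suc n) (Suc n)" "A $$ (n, n) \<noteq> 0" "e > 0"
  shows "\<forall>\<^sub>F t in at_top. \<forall>p\<in>{..n}. \<forall>q\<in>{..n}.
    cmod (vertigo_norm n t A $$ (p, q) - (if p = q then complex_of_real (real (n choose p) / 2 ^ n) else 0)) < e"
proof -
  have "\<forall>\<^sub>F t in at_top.
      cmod (vertigo_norm n t A $$ (p, q) - (if p = q then complex_of_real (real (n choose p) / 2 ^ n) else 0)) < e"
    if "p \<le> n" "q \<le> n" for p q
    using tendstoD[OF vertigo_norm_asymptotics[OF assms(1,2) that] assms(3)] by (simp add: dist_norm)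
  then show ?thesis
    by (intro eventually_ball_finite ballI) auto
qed

lemma state_vertigo_norm_if_near_diagonal:
  assumes "quasi_state_n n A" "mtrace (vertigo n t A) \<noteq> 0"
    and near: "\<forall>p\<in>{..n}. \<forall>q\<in>{..n}.
      cmod (vertigo_norm n t A $$ (p, q) - (if p = q then complex_of_real (real (n choose p) / 2 ^ n) else 0))
        < 1 / (2 ^ n * real (Suc n))"
  shows "state_n n (vertigo_norm n t A)"
proof -
  have quasi: "quasi_state_n n (vertigo_norm n t A)"
    by (rule quasi_state_vertigo_norm[OF assms(1,2)])
  have diag: "1 / 2 ^ n \<le> real (n choose p) / 2 ^ n" if "p < Suc n" for p
  proof -
    have "1 \<le> n choose p" using that by (simp add: Suc_le_eq)
    then show ?thesis by (simp add: divide_right_mono)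
  qed
  have near_le: "cmod (vertigo_norm n t A $$ (i, j)
      - (if i = j then complex_of_real (real (n choose i) / 2 ^ n) else 0)) \<le> 1 / 2 ^ n / real (Suc n)"
    if "i < Suc n" "j < Suc n" for i j
  proof -
    have "cmod (vertigo_norm n t A $$ (i, j)
        - (if i = j then complex_of_real (real (n choose i) / 2 ^ n) else 0)) < 1 / (2 ^ n * real (Suc n))"
      using near that by (metis atMost_iff less_Suc_eq_le)
    then show ?thesis unfolding divide_divide_eq_left by (rule less_imp_le)
  qed
  have "psd (vertigo_norm n t A)"
    using quasi unfolding quasi_state_n_def fock_dim_def
    by (intro psd_if_near_positive_diagonal[where d = "\<lambda>p. real (n choose p) / 2 ^ n", OF _ _ diag near_le])
      auto
  with quasi show ?thesis by (simp add: state_n_def)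
qed

theorem lemma5:
  fixes n :: nat and A :: "complex mat"
  assumes "quasi_state_n n A"
    and "A $$ (n, n) \<noteq> 0"
  shows "\<exists>t0 > 0. \<forall>t \<ge> t0. mtrace (vertigo n t A) \<noteq> 0 \<and> state_n n (vertigo_norm n t A)"
proof -
  have A: "A \<in> carrier_mat (Suc n) (Suc n)"
    using assms(1) by (simp add: quasi_state_n_def fock_dim_def)
  have e: "0 < 1 / (2 ^ n * real (Suc n))" by simp
  have "\<forall>\<^sub>F t in at_top. mtrace (vertigo n t A) \<noteq> 0 \<and> state_n n (vertigo_norm n t A)"
    using eventually_vertigo_trace_ne_0[OF A assms(2)] eventually_vertigo_norm_near_diagonal[OF A assms(2) e]
    by eventually_elim (blast intro: state_vertigo_norm_if_near_diagonal[OF assms(1)])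
  then obtain t0 where "\<forall>t \<ge> t0. mtrace (vertigo n t A) \<noteq> 0 \<and> state_n n (vertigo_norm n t A)"
    by (auto simp: eventually_at_top_linorder)
  then show ?thesis
    by (intro exI[of _ "max t0 1"]) auto
qed

end
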